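(* Let $p,q\ge1$, $\alpha:\mathbb Z_p\times\mathbb Z_q\to[0,1]$ a probability distribution with $\alpha(0,0)=0$, and let $\tilde{\mathcal T}_{*t}=e^{t\tilde{\mathcal L}_*}$ with $\tilde{\mathcal L}_*(x)=\sum_{(i,j)}\alpha(i,j)(J_p^i\otimes J_q^j)x(J_p^i\otimes J_q^j)^*-x$ on $\mathcal M_p(\mathbb C)\otimes\mathcal M_q(\mathbb C)$ (the pre-dual of the $\rho$-adjoint, $\rho=\frac{1}{pq}\mathbf1$, of the generator of the circulant semigroup $e^{t\mathcal L_*}$, $\mathcal L_*(x)=\sum_{(i,j)}\alpha(p-i,q-j)(J_p^i\otimes J_q^j)x(J_p^i\otimes J_q^j)^*-x$). With $\Phi_{m,n}(t)$ as below, for all $(i,j),(i',j')$ and $t\ge0$: (i) $\tilde{\mathcal T}_{*t}(|e_i\otimes e_j\rangle\langle e_{i'}\otimes e_{j'}|)=\frac{1}{pq}\sum_{m,n}\Phi_{p-m,q-n}(t)|e_{m+i}\otimes e_{n+j}\rangle\langle e_{m+i'}\otimes e_{n+j'}|$; equivalently, on each subspace $\mathrm{span}\{|e_i\otimes e_j\rangle\langle e_{i+k}\otimes e_{j+l}|\}$ the action corresponds to $e_i\otimes e_j\mapsto(e_i\otimes e_j)e^{tQ^{T}}$, $Q^T$ the transpose of $Q=\sum_{i,j}\alpha'(i,j)J_p^i\otimes J_q^j$; (ii) $\tilde\Omega_t=\frac{1}{pq}\sum_{m,n}\Phi_{p-m,q-n}(t)|u_{mn}\rangle\langle u_{mn}|$,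 where $u_{mn}=\frac{1}{\sqrt{pq}}\sum_{i,j}(e_i\otimes e_j)\otimes(e_{m+i}\otimes e_{n+j})$.
   Context: $\{e_j\}$ canonical bases (indices mod $p$, $q$); $J_p=\sum_j|e_j\rangle\langle e_{j+1}|$, similarly $J_q$; $\omega_p,\omega_q$ primitive roots of unity. $\alpha'(i,j)=\alpha(i,j)$ for $(i,j)\ne(0,0)$, $\alpha'(0,0)=-1$; $\lambda_{kl}=\sum_{i,j}\alpha'(i,j)\overline\omega_p^{ik}\overline\omega_q^{jl}$; $\Phi_{m,n}(t)=\sum_{k,l}\omega_p^{mk}\omega_q^{nl}e^{t\lambda_{kl}}$ (indices mod $p,q$). $\Omega_\rho=\frac{1}{\sqrt{pq}}\sum_{i,j}(e_i\otimes e_j)\otimes(e_i\otimes e_j)$ and $\tilde\Omega_t=(\mathrm{id}\otimes\tilde{\mathcal T}_{*t})(|\Omega_\rho\rangle\langle\Omega_\rho|)$. *)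

theory Defs
  imports Complex_Main
begin

text \<open>Matrices over a finite index set are represented as functions
  index => index => complex; only entries with indices in the relevant
  index set are meaningful.\<close>

type_synonym 'a cmat = "'a \<Rightarrow> 'a \<Rightarrow> complex"

definition idx :: "nat \<Rightarrow> nat \<Rightarrow> (nat \<times> nat) set" where
  "idx p q = {0..<p} \<times> {0..<q}"

definition mmul :: "nat \<Rightarrow> nat cmat \<Rightarrow> nat cmat \<Rightarrow> nat cmat" where
  "mmul n A B = (\<lambda>a b. \<Sum>c<n. A a c * B c b)"

definition mone :: "nat cmat" where
  "mone = (\<lambda>a b. if a = b then 1 else 0)"

fun mpow :: "nat \<Rightarrow> nat cmat \<Rightarrow> nat \<Rightarrow> nat cmat" where
  "mpow n A 0 = mone"
| "mpow n A (Suc k) = mmul n (mpow n A k) A"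

definition shiftJ :: "nat \<Rightarrow> nat cmat" where
  "shiftJ n = (\<lambda>a b. if b = (a + 1) mod n then 1 else 0)"

definition kron :: "nat cmat \<Rightarrow> nat cmat \<Rightarrow> (nat \<times> nat) cmat" where
  "kron A B = (\<lambda>(a1, a2) (b1, b2). A a1 b1 * B a2 b2)"

definition pmul :: "nat \<Rightarrow> nat \<Rightarrow> (nat \<times> nat) cmat \<Rightarrow> (nat \<times> nat) cmat \<Rightarrow> (nat \<times> nat) cmat" where
  "pmul p q A B = (\<lambda>a b. \<Sum>c\<in>idx p q. A a c * B c b)"

definition adj :: "'a cmat \<Rightarrow> 'a cmat" where
  "adj A = (\<lambda>a b. cnj (A b a))"

definition KJ :: "nat \<Rightarrow> nat \<Rightarrow> nat \<Rightarrow> nat \<Rightarrow> (nat \<times> nat) cmat" where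
  "KJ p q i j = kron (mpow p (shiftJ p) i) (mpow q (shiftJ q) j)"

definition Ltil :: "nat \<Rightarrow> nat \<Rightarrow> (nat \<Rightarrow> nat \<Rightarrow> real) \<Rightarrow> (nat \<times> nat) cmat \<Rightarrow> (nat \<times> nat) cmat" where
  "Ltil p q \<alpha> x = (\<lambda>a b.
     (\<Sum>(i, j)\<in>idx p q. complex_of_real (\<alpha> i j) *
        pmul p q (pmul p q (KJ p q i j) x) (adj (KJ p q i j)) a b) - x a b)"

definition Ttil :: "nat \<Rightarrow> nat \<Rightarrow> (nat \<Rightarrow> nat \<Rightarrow> real) \<Rightarrow> real \<Rightarrow> (nat \<times> nat) cmat \<Rightarrow> (nat \<times> nat) cmat" where
  "Ttil p q \<alpha> t x = (\<lambda>a b. \<Sum>n. complex_of_real (t ^ n / fact n) * ((Ltil p q \<alpha> ^^ n) x) a b)"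

definition omega :: "nat \<Rightarrow> complex" where
  "omega n = exp (2 * complex_of_real pi * \<i> / of_nat n)"

definition alpha' :: "(nat \<Rightarrow> nat \<Rightarrow> real) \<Rightarrow> nat \<Rightarrow> nat \<Rightarrow> real" where
  "alpha' \<alpha> i j = (if i = 0 \<and> j = 0 then -1 else \<alpha> i j)"

definition lam :: "nat \<Rightarrow> nat \<Rightarrow> (nat \<Rightarrow> nat \<Rightarrow> real) \<Rightarrow> nat \<Rightarrow> nat \<Rightarrow> complex" where
  "lam p q \<alpha> k l = (\<Sum>(i, j)\<in>idx p q. complex_of_real (alpha' \<alpha> i j) *
      cnj (omega p) ^ (i * k) * cnj (omega q) ^ (j * l))"

definition Phi :: "nat \<Rightarrow> nat \<Rightarrow> (nat \<Rightarrow> nat \<Rightarrow> real) \<Rightarrow> nat \<Rightarrow> nat \<Rightarrow> real \<Rightarrow> complex" where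
  "Phi p q \<alpha> m n t = (\<Sum>(k, l)\<in>idx p q. omega p ^ (m * k) * omega q ^ (n * l) *
      exp (complex_of_real t * lam p q \<alpha> k l))"

definition munit :: "'a \<Rightarrow> 'a \<Rightarrow> 'a cmat" where
  "munit a b = (\<lambda>x y. if x = a \<and> y = b then 1 else 0)"

definition outer :: "('a \<Rightarrow> complex) \<Rightarrow> ('a \<Rightarrow> complex) \<Rightarrow> 'a cmat" where
  "outer v w = (\<lambda>x y. v x * cnj (w y))"

definition idtensor :: "('b cmat \<Rightarrow> 'b cmat) \<Rightarrow> ('a \<times> 'b) cmat \<Rightarrow> ('a \<times> 'b) cmat" where
  "idtensor T X = (\<lambda>(a, c) (b, d). T (\<lambda>c' d'. X (a, c') (b, d')) c d)"

definition uvec :: "nat \<Rightarrow> nat \<Rightarrow> nat \<Rightarrow> nat \<Rightarrow> (nat \<times> nat) \<times> (nat \<times> nat) \<Rightarrow> complex" where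
  "uvec p q m n = (\<lambda>((i, j), (k, l)).
     if (i, j) \<in> idx p q \<and> k = (m + i) mod p \<and> l = (n + j) mod q
     then complex_of_real (1 / sqrt (real (p * q))) else 0)"

definition OmegaRho :: "nat \<Rightarrow> nat \<Rightarrow> (nat \<times> nat) \<times> (nat \<times> nat) \<Rightarrow> complex" where
  "OmegaRho p q = (\<lambda>((i, j), (k, l)).
     if (i, j) \<in> idx p q \<and> (k, l) = (i, j)
     then complex_of_real (1 / sqrt (real (p * q))) else 0)"

end

theory Submission
  imports Defs "HOL-Analysis.Complex_Transcendental"
begin

text \<open>The generator acts on a matrix unit \<open>|a\<rangle>\<langle>b|\<close> by translating both indices
  simultaneously along the group \<open>\<int>\<^sub>p \<times> \<int>\<^sub>q\<close>, with weights \<open>\<alpha>'\<close>. Hence the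
  Fourier modes \<open>\<Sum>\<^sub>m \<chi>\<^sub>k(m) |c+m\<rangle>\<langle>d+m|\<close> are eigenvectors with eigenvalue
  \<open>\<lambda>\<^sub>k\<close>, and every matrix unit is the average of its Fourier modes. Exponentiating
  eigenvalue by eigenvalue and transforming back gives the coefficients \<open>\<Phi>\<close>.
  Part (ii) follows because every block of \<open>|\<Omega>\<^sub>\<rho>\<rangle>\<langle>\<Omega>\<^sub>\<rho>|\<close> is a multiple of a
  matrix unit.\<close>

lemma omega_power_self: "n \<ge> 1 \<Longrightarrow> omega n ^ n = 1"
proof -
  assume n: "n \<ge> 1"
  have "omega n ^ n = exp (of_nat n * (2 * complex_of_real pi * \<i> / of_nat n))"
    unfolding omega_def by (rule exp_of_nat_mult[symmetric])
  also have "of_nat n * (2 * complex_of_real pi * \<i> / of_nat n) = 2 * complex_of_real pi * \<i>"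
    using n by (simp add: field_simps)
  finally show ?thesis by simp
qed

lemma omega_power_neq_1: "0 < m \<Longrightarrow> m < n \<Longrightarrow> omega n ^ m \<noteq> 1"
proof
  assume m: "0 < m" "m < n" and e: "omega n ^ m = 1"
  have "omega n ^ m = exp (of_nat m * (2 * complex_of_real pi * \<i> / of_nat n))"
    unfolding omega_def by (rule exp_of_nat_mult[symmetric])
  with e have "exp (of_nat m * (2 * complex_of_real pi * \<i> / of_nat n)) = 1" by simp
  then obtain k :: int
    where k: "Im (of_nat m * (2 * complex_of_real pi * \<i> / of_nat n)) = of_int (2 * k) * pi"
    unfolding exp_eq_1 by blast
  have "Im (of_nat m * (2 * complex_of_real pi * \<i> / of_nat n)) = 2 * pi * m / n"
    by (simp add: Im_divide_of_nat)
  with k have "2 * pi * m / n = 2 * k * pi" by simp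
  then have "real m / n = k" using pi_gt_zero m by (simp add: field_simps)
  moreover have "0 < real m / n" "real m / n < 1" using m by auto
  ultimately have "0 < k" "k < 1" by simp_all
  then show False by simp
qed

lemma cnj_omega_power:
  assumes "m \<le> n" "n \<ge> 1"
  shows "cnj (omega n) ^ m = omega n ^ (n - m)"
proof -
  have "cnj (omega n) * omega n = 1"
  proof -
    have "cnj (omega n) = exp (- (2 * complex_of_real pi * \<i> / of_nat n))"
      unfolding omega_def exp_cnj by (simp add: complex_cnj_divide)
    then show ?thesis unfolding omega_def by (simp add: exp_minus field_simps)
  qed
  then have "cnj (omega n) ^ m * omega n ^ m = 1"
    by (metis power_mult_distrib power_one)
  moreover have "omega n ^ (n - m) * omega n ^ m = 1"
    using omega_power_self[OF assms(2)] assms by (simp add: power_add[symmetric])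
  moreover have "omega n ^ m \<noteq> 0" unfolding omega_def by simp
  ultimately show ?thesis by (metis mult_right_cancel)
qed

lemma power_mod_of_root: "(z::'a::monoid_mult) ^ n = 1 \<Longrightarrow> z ^ (x mod n) = z ^ x"
proof -
  assume z: "z ^ n = 1"
  have "z ^ x = z ^ (n * (x div n) + x mod n)" by simp
  also have "\<dots> = z ^ (x mod n)" by (simp only: power_add power_mult z power_one mult_1)
  finally show ?thesis by simp
qed

lemma sum_cnj_omega_power:
  assumes "m < n"
  shows "(\<Sum>k<n. (cnj (omega n) ^ m) ^ k) = (if m = 0 then of_nat n else 0)"
proof (cases "m = 0")
  case False
  have "cnj (omega n) ^ m = omega n ^ (n - m)"
    using assms by (simp add: cnj_omega_power)
  then have "cnj (omega n) ^ m \<noteq> 1"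
    using omega_power_neq_1[of "n - m" n] False assms by simp
  moreover have "(cnj (omega n) ^ m) ^ n = 1"
  proof -
    have "(cnj (omega n) ^ m) ^ n = (cnj (omega n) ^ n) ^ m"
      by (simp add: power_mult[symmetric] mult.commute)
    then show ?thesis using cnj_omega_power[of n n] assms by simp
  qed
  ultimately show ?thesis using False by (simp add: sum_gp_strict)
qed simp

lemma mod_add_cancel_nat: "((x::nat) + a) mod n = (y + a) mod n \<longleftrightarrow> x mod n = y mod n"
  by (simp add: nat_mod_eq_iff)

lemma finite_idx [simp]: "finite (idx p q)"
  by (simp add: idx_def)

definition idx_add :: "nat \<Rightarrow> nat \<Rightarrow> nat \<times> nat \<Rightarrow> nat \<times> nat \<Rightarrow> nat \<times> nat" where
  "idx_add p q m c = ((fst m + fst c) mod p, (snd m + snd c) mod q)"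

lemma idx_add_mem: "p \<ge> 1 \<Longrightarrow> q \<ge> 1 \<Longrightarrow> idx_add p q m c \<in> idx p q"
  by (simp add: idx_add_def idx_def)

lemma idx_add_zero: "c \<in> idx p q \<Longrightarrow> idx_add p q (0, 0) c = c"
  by (cases c) (simp add: idx_add_def idx_def)

lemma bij_betw_idx_add:
  assumes "p \<ge> 1" "q \<ge> 1"
  shows "bij_betw (\<lambda>m. idx_add p q m s) (idx p q) (idx p q)"
proof -
  have inj: "inj_on (\<lambda>m. idx_add p q m s) (idx p q)"
  proof (rule inj_onI)
    fix x y assume "x \<in> idx p q" "y \<in> idx p q" "idx_add p q x s = idx_add p q y s"
    then show "x = y"
      by (cases x; cases y) (auto simp: idx_add_def idx_def mod_add_cancel_nat)
  qed
  moreover have "(\<lambda>m. idx_add p q m s) ` idx p q \<subseteq> idx p q"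
    using idx_add_mem[OF assms] by blast
  ultimately show ?thesis
    using endo_inj_surj[OF finite_idx] by (simp add: bij_betw_def)
qed

lemma idx_add_idx_add_eq_iff:
  assumes "a \<in> idx p q"
  shows "idx_add p q (idx_add p q m s) c = idx_add p q s a \<longleftrightarrow> idx_add p q m c = a"
proof -
  have "((fst m + fst s) mod p + fst c) mod p = ((fst m + fst c) + fst s) mod p"
       "((snd m + snd s) mod q + snd c) mod q = ((snd m + snd c) + snd s) mod q"
    by (simp_all only: mod_add_left_eq) (simp_all add: ac_simps)
  moreover have "(fst s + fst a) mod p = (fst a + fst s) mod p"
       "(snd s + snd a) mod q = (snd a + snd s) mod q"
    by (simp_all add: add.commute)
  moreover have "fst a mod p = fst a" "snd a mod q = snd a"
    using assms by (auto simp: idx_def)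
  ultimately show ?thesis
    unfolding idx_add_def prod_eq_iff fst_conv snd_conv by (simp only: mod_add_cancel_nat)
qed

definition character :: "nat \<Rightarrow> nat \<Rightarrow> nat \<times> nat \<Rightarrow> nat \<times> nat \<Rightarrow> complex" where
  "character p q k m = cnj (omega p) ^ (fst m * fst k) * cnj (omega q) ^ (snd m * snd k)"

lemma character_idx_add:
  assumes "p \<ge> 1" "q \<ge> 1"
  shows "character p q k (idx_add p q m s) = character p q k m * character p q k s"
proof -
  have "cnj (omega p) ^ p = 1" "cnj (omega q) ^ q = 1"
    using cnj_omega_power[of p p] cnj_omega_power[of q q] assms by simp_all
  then have "cnj (omega p) ^ (((fst m + fst s) mod p) * fst k) = cnj (omega p) ^ ((fst m + fst s) * fst k)"
      "cnj (omega q) ^ (((snd m + snd s) mod q) * snd k) = cnj (omega q) ^ ((snd m + snd s) * snd k)"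
    by (simp_all add: power_mult power_mod_of_root)
  then show ?thesis
    unfolding character_def idx_add_def by (simp add: algebra_simps power_add)
qed

lemma sum_character:
  assumes "m \<in> idx p q"
  shows "(\<Sum>k\<in>idx p q. character p q k m) = (if m = (0, 0) then of_nat (p * q) else 0)"
proof -
  have "(\<Sum>k\<in>idx p q. character p q k m)
      = (\<Sum>k<p. (cnj (omega p) ^ fst m) ^ k) * (\<Sum>l<q. (cnj (omega q) ^ snd m) ^ l)"
    unfolding idx_def character_def sum_product sum.cartesian_product
    by (intro sum.cong) (auto simp: power_mult lessThan_atLeast0)
  then show ?thesis
    using assms by (cases m) (simp add: sum_cnj_omega_power idx_def)
qed

lemma lam_eq_sum_character:
  "lam p q \<alpha> (fst k) (snd k)
     = (\<Sum>s\<in>idx p q. complex_of_real (alpha' \<alpha> (fst s) (snd s)) * character p q k s)"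
  unfolding lam_def character_def by (simp add: case_prod_beta mult.assoc)

lemma Phi_eq_sum_character:
  assumes "m \<in> idx p q"
  shows "Phi p q \<alpha> (p - fst m) (q - snd m) t
     = (\<Sum>k\<in>idx p q. character p q k m * exp (complex_of_real t * lam p q \<alpha> (fst k) (snd k)))"
proof -
  have "fst m \<le> p" "snd m \<le> q" "p \<ge> 1" "q \<ge> 1" using assms by (auto simp: idx_def)
  then show ?thesis
    unfolding Phi_def character_def case_prod_beta
    by (intro sum.cong refl) (simp add: power_mult cnj_omega_power)
qed

lemma mpow_shiftJ:
  "a < n \<Longrightarrow> mpow n (shiftJ n) i a b = (if b = (a + i) mod n then 1 else 0)"
proof (induction i arbitrary: b)
  case 0
  then show ?case by (simp add: mone_def)
next
  case (Suc i)
  have "mpow n (shiftJ n) (Suc i) a b = (\<Sum>c<n. (if c = (a + i) mod n then 1 else 0) * shiftJ n c b)"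
    using Suc by (simp add: mmul_def)
  also have "\<dots> = (\<Sum>c<n. if c = (a + i) mod n then shiftJ n c b else 0)"
    by (rule sum.cong) simp_all
  also have "\<dots> = shiftJ n ((a + i) mod n) b"
    using Suc.prems by simp
  finally show ?case by (simp add: shiftJ_def mod_Suc_eq)
qed

lemma KJ_entry:
  "a \<in> idx p q \<Longrightarrow> KJ p q i j a e = (if e = idx_add p q (i, j) a then 1 else 0)"
  by (cases a; cases e) (auto simp: KJ_def kron_def idx_def idx_add_def mpow_shiftJ add.commute)

lemma KJ_conj_munit:
  assumes "a \<in> idx p q" "b \<in> idx p q" "u \<in> idx p q" "v \<in> idx p q"
  shows "pmul p q (pmul p q (KJ p q i j) (munit u v)) (adj (KJ p q i j)) a b
     = (if u = idx_add p q (i, j) a \<and> v = idx_add p q (i, j) b then 1 else 0)"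
proof -
  have "pmul p q (KJ p q i j) (munit u v) a c
      = (\<Sum>e\<in>idx p q. if e = u then (if u = idx_add p q (i, j) a \<and> c = v then 1 else 0) else 0)" for c
    unfolding pmul_def using assms(1) by (intro sum.cong) (auto simp: KJ_entry munit_def)
  then have left: "pmul p q (KJ p q i j) (munit u v) a c
      = (if u = idx_add p q (i, j) a \<and> c = v then 1 else 0)" for c
    using assms(3) by (simp add: sum.delta)
  have "pmul p q (pmul p q (KJ p q i j) (munit u v)) (adj (KJ p q i j)) a b
      = (\<Sum>c\<in>idx p q. if c = v then (if u = idx_add p q (i, j) a \<and> v = idx_add p q (i, j) b then 1 else 0) else 0)"
    unfolding pmul_def[of p q "pmul p q (KJ p q i j) (munit u v)"] adj_def
    using assms by (intro sum.cong) (auto simp: left KJ_entry)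
  then show ?thesis
    using assms(4) by (simp add: sum.delta)
qed

lemma Ltil_add:
  "Ltil p q \<alpha> (\<lambda>a b. x a b + y a b) = (\<lambda>a b. Ltil p q \<alpha> x a b + Ltil p q \<alpha> y a b)"
  by (simp add: Ltil_def pmul_def sum.distrib sum_distrib_left sum_distrib_right
      case_prod_beta algebra_simps)

lemma Ltil_scale: "Ltil p q \<alpha> (\<lambda>a b. c * x a b) = (\<lambda>a b. c * Ltil p q \<alpha> x a b)"
  by (simp add: Ltil_def pmul_def sum_distrib_left sum_distrib_right case_prod_beta algebra_simps)

lemma Ltil_sum:
  "finite S \<Longrightarrow> Ltil p q \<alpha> (\<lambda>a b. \<Sum>k\<in>S. c k * f k a b) a b = (\<Sum>k\<in>S. c k * Ltil p q \<alpha> (f k) a b)"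
proof (induction S arbitrary: a b rule: finite_induct)
  case empty
  then show ?case by (simp add: Ltil_def pmul_def)
next
  case (insert k S)
  then show ?case by (simp add: Ltil_add Ltil_scale)
qed

lemma Ltil_power_scale:
  "(Ltil p q \<alpha> ^^ n) (\<lambda>a b. s * f a b) = (\<lambda>a b. s * (Ltil p q \<alpha> ^^ n) f a b)"
  by (induction n) (simp_all add: Ltil_scale)

lemma Ltil_cong:
  "\<lbrakk>\<forall>a\<in>idx p q. \<forall>b\<in>idx p q. x a b = y a b; a \<in> idx p q; b \<in> idx p q\<rbrakk>
   \<Longrightarrow> Ltil p q \<alpha> x a b = Ltil p q \<alpha> y a b"
  unfolding Ltil_def pmul_def by simp

lemma Ltil_munit:
  assumes "a \<in> idx p q" "b \<in> idx p q" "u \<in> idx p q" "v \<in> idx p q" "\<alpha> 0 0 = 0"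
  shows "Ltil p q \<alpha> (munit u v) a b = (\<Sum>s\<in>idx p q. complex_of_real (alpha' \<alpha> (fst s) (snd s)) *
            (if u = idx_add p q s a \<and> v = idx_add p q s b then 1 else 0))"
proof -
  let ?g = "\<lambda>s. if u = idx_add p q s a \<and> v = idx_add p q s b then 1 else 0 :: complex"
  have zero: "(0, 0) \<in> idx p q" using assms(1) by (auto simp: idx_def)
  have "munit u v a b = ?g (0, 0)"
    using assms(1,2) by (auto simp: munit_def idx_add_zero)
  then have "Ltil p q \<alpha> (munit u v) a b
      = (\<Sum>s\<in>idx p q. complex_of_real (\<alpha> (fst s) (snd s)) * ?g s) - ?g (0, 0)"
    unfolding Ltil_def using assms by (simp add: KJ_conj_munit case_prod_beta)
  also have "\<dots> = (\<Sum>s\<in>idx p q. complex_of_real (alpha' \<alpha> (fst s) (snd s)) * ?g s)"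
    \<comment> \<open>the \<open>-x\<close> term of the generator is the translation by \<open>(0, 0)\<close> with weight \<open>\<alpha>'(0, 0) = -1\<close>\<close>
  proof -
    have "(\<Sum>s\<in>idx p q - {(0, 0)}. complex_of_real (alpha' \<alpha> (fst s) (snd s)) * ?g s)
        = (\<Sum>s\<in>idx p q - {(0, 0)}. complex_of_real (\<alpha> (fst s) (snd s)) * ?g s)"
      by (intro sum.cong) (auto simp: alpha'_def)
    then show ?thesis
      using zero assms(5) by (simp add: sum.remove alpha'_def)
  qed
  finally show ?thesis .
qed

definition fourier_mode :: "nat \<Rightarrow> nat \<Rightarrow> nat \<times> nat \<Rightarrow> nat \<times> nat \<Rightarrow> nat \<times> nat \<Rightarrow> (nat \<times> nat) cmat" where
  "fourier_mode p q c d k =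
     (\<lambda>a b. \<Sum>m\<in>idx p q. character p q k m * munit (idx_add p q m c) (idx_add p q m d) a b)"

lemma fourier_mode_eigen:
  assumes "a \<in> idx p q" "b \<in> idx p q" "\<alpha> 0 0 = 0"
  shows "Ltil p q \<alpha> (fourier_mode p q c d k) a b = lam p q \<alpha> (fst k) (snd k) * fourier_mode p q c d k a b"
proof -
  have pq: "p \<ge> 1" "q \<ge> 1" using assms by (auto simp: idx_def)
  let ?a = "\<lambda>s. complex_of_real (alpha' \<alpha> (fst s) (snd s))"
  let ?P = "\<lambda>m s. idx_add p q m c = idx_add p q s a \<and> idx_add p q m d = idx_add p q s b"
  have "Ltil p q \<alpha> (fourier_mode p q c d k) a b
      = (\<Sum>m\<in>idx p q. character p q k m * Ltil p q \<alpha> (munit (idx_add p q m c) (idx_add p q m d)) a b)"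
    unfolding fourier_mode_def by (rule Ltil_sum) simp
  also have "\<dots> = (\<Sum>m\<in>idx p q. character p q k m * (\<Sum>s\<in>idx p q. ?a s * (if ?P m s then 1 else 0)))"
    using assms pq by (simp add: Ltil_munit idx_add_mem)
  also have "\<dots> = (\<Sum>s\<in>idx p q. ?a s * (\<Sum>m\<in>idx p q. character p q k m * (if ?P m s then 1 else 0)))"
    unfolding sum_distrib_left by (subst sum.swap) (simp add: algebra_simps)
  also have "\<dots> = (\<Sum>s\<in>idx p q. ?a s * (character p q k s * fourier_mode p q c d k a b))"
  proof (intro sum.cong refl arg_cong2[where f = "(*)"])
    fix s assume "s \<in> idx p q"
    \<comment> \<open>substituting \<open>m \<mapsto> m + s\<close> moves the translation by \<open>s\<close> onto the character\<close>
    have "(\<Sum>m\<in>idx p q. character p q k m * (if ?P m s then 1 else 0))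
        = (\<Sum>m\<in>idx p q. character p q k (idx_add p q m s) * (if ?P (idx_add p q m s) s then 1 else 0))"
      by (rule sum.reindex_bij_betw[OF bij_betw_idx_add[OF pq], symmetric])
    also have "\<dots> = (\<Sum>m\<in>idx p q. character p q k s *
                      (character p q k m * munit (idx_add p q m c) (idx_add p q m d) a b))"
      using assms pq by (intro sum.cong refl) (auto simp: character_idx_add idx_add_idx_add_eq_iff munit_def)
    finally show "(\<Sum>m\<in>idx p q. character p q k m * (if ?P m s then 1 else 0))
        = character p q k s * fourier_mode p q c d k a b"
      unfolding fourier_mode_def by (simp add: sum_distrib_left)
  qed
  also have "\<dots> = lam p q \<alpha> (fst k) (snd k) * fourier_mode p q c d k a b"
    unfolding lam_eq_sum_character sum_distrib_right by (intro sum.cong refl) (simp add: algebra_simps)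
  finally show ?thesis .
qed

lemma munit_eq_sum_fourier_mode:
  assumes "c \<in> idx p q" "d \<in> idx p q"
  shows "munit c d a b = complex_of_real (1 / real (p * q)) * (\<Sum>k\<in>idx p q. fourier_mode p q c d k a b)"
proof -
  have pq: "p \<ge> 1" "q \<ge> 1" using assms by (auto simp: idx_def)
  have "(\<Sum>k\<in>idx p q. fourier_mode p q c d k a b)
      = (\<Sum>m\<in>idx p q. munit (idx_add p q m c) (idx_add p q m d) a b * (\<Sum>k\<in>idx p q. character p q k m))"
    unfolding fourier_mode_def sum_distrib_left by (subst sum.swap) (simp add: algebra_simps)
  also have "\<dots> = (\<Sum>m\<in>idx p q. if m = (0, 0) then munit c d a b * of_nat (p * q) else 0)"
    using assms by (intro sum.cong refl) (simp add: sum_character idx_add_zero)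
  also have "\<dots> = munit c d a b * of_nat (p * q)"
    using pq by (simp add: idx_def)
  finally show ?thesis using pq by simp
qed

lemma Ltil_power_munit:
  assumes "a \<in> idx p q" "b \<in> idx p q" "c \<in> idx p q" "d \<in> idx p q" "\<alpha> 0 0 = 0"
  shows "(Ltil p q \<alpha> ^^ n) (munit c d) a b
     = (\<Sum>k\<in>idx p q. complex_of_real (1 / real (p * q)) * lam p q \<alpha> (fst k) (snd k) ^ n *
          fourier_mode p q c d k a b)"
  using assms(1,2)
proof (induction n arbitrary: a b)
  case 0
  then show ?case using munit_eq_sum_fourier_mode[OF assms(3,4), of a b] by (simp add: sum_distrib_left)
next
  case (Suc n)
  have "(Ltil p q \<alpha> ^^ Suc n) (munit c d) a b
      = Ltil p q \<alpha> (\<lambda>a b. \<Sum>k\<in>idx p q. complex_of_real (1 / real (p * q)) * lam p q \<alpha> (fst k) (snd k) ^ n *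
          fourier_mode p q c d k a b) a b"
    using Suc by (simp add: Ltil_cong)
  also have "\<dots> = (\<Sum>k\<in>idx p q. complex_of_real (1 / real (p * q)) * lam p q \<alpha> (fst k) (snd k) ^ n *
          Ltil p q \<alpha> (fourier_mode p q c d k) a b)"
    by (rule Ltil_sum) simp
  finally show ?case
    using Suc.prems assms(5) by (simp add: fourier_mode_eigen mult_ac)
qed

lemma Ttil_series_munit:
  assumes "a \<in> idx p q" "b \<in> idx p q" "c \<in> idx p q" "d \<in> idx p q" "\<alpha> 0 0 = 0"
  shows "(\<lambda>n. complex_of_real (t ^ n / fact n) * (Ltil p q \<alpha> ^^ n) (munit c d) a b) sums
     (complex_of_real (1 / real (p * q)) *
      (\<Sum>m\<in>idx p q. Phi p q \<alpha> (p - fst m) (q - snd m) t *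
         munit (idx_add p q m c) (idx_add p q m d) a b))"
proof -
  let ?e = "\<lambda>k. exp (complex_of_real t * lam p q \<alpha> (fst k) (snd k))"
  let ?w = "\<lambda>k. complex_of_real (1 / real (p * q)) * fourier_mode p q c d k a b"
  have "(\<lambda>n. \<Sum>k\<in>idx p q. ?w k * ((complex_of_real t * lam p q \<alpha> (fst k) (snd k)) ^ n /\<^sub>R fact n))
      sums (\<Sum>k\<in>idx p q. ?w k * ?e k)"
    by (intro sums_sum sums_mult exp_converges)
  moreover have "(\<Sum>k\<in>idx p q. ?w k * ((complex_of_real t * lam p q \<alpha> (fst k) (snd k)) ^ n /\<^sub>R fact n))
      = complex_of_real (t ^ n / fact n) * (Ltil p q \<alpha> ^^ n) (munit c d) a b" for n
    unfolding Ltil_power_munit[where \<alpha> = \<alpha>, OF assms] sum_distrib_left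
    by (intro sum.cong refl) (simp add: scaleR_conv_of_real power_mult_distrib field_simps)
  moreover have "(\<Sum>k\<in>idx p q. ?w k * ?e k)
      = complex_of_real (1 / real (p * q)) *
        (\<Sum>m\<in>idx p q. \<Sum>k\<in>idx p q. ?e k * character p q k m * munit (idx_add p q m c) (idx_add p q m d) a b)"
    unfolding fourier_mode_def sum_distrib_left sum_distrib_right
    by (subst sum.swap) (simp add: algebra_simps)
  moreover have "(\<Sum>k\<in>idx p q. ?e k * character p q k m * munit (idx_add p q m c) (idx_add p q m d) a b)
      = Phi p q \<alpha> (p - fst m) (q - snd m) t * munit (idx_add p q m c) (idx_add p q m d) a b"
    if "m \<in> idx p q" for m
    unfolding Phi_eq_sum_character[OF that] sum_distrib_right by (simp add: mult_ac)
  ultimately show ?thesis by simp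
qed

lemma Ttil_munit:
  assumes "a \<in> idx p q" "b \<in> idx p q" "c \<in> idx p q" "d \<in> idx p q" "\<alpha> 0 0 = 0"
  shows "Ttil p q \<alpha> t (munit c d) a b
     = complex_of_real (1 / real (p * q)) *
       (\<Sum>m\<in>idx p q. Phi p q \<alpha> (p - fst m) (q - snd m) t *
          munit (idx_add p q m c) (idx_add p q m d) a b)"
  unfolding Ttil_def using Ttil_series_munit[where \<alpha> = \<alpha>, OF assms] by (rule sums_unique[symmetric])

lemma Ttil_scale:
  assumes "summable (\<lambda>n. complex_of_real (t ^ n / fact n) * (Ltil p q \<alpha> ^^ n) f a b)"
  shows "Ttil p q \<alpha> t (\<lambda>x y. s * f x y) a b = s * Ttil p q \<alpha> t f a b"
  unfolding Ttil_def Ltil_power_scale using suminf_mult[OF assms, of s] by (simp add: mult_ac)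

lemma OmegaRho_block:
  assumes "a \<in> idx p q" "b \<in> idx p q"
  shows "(\<lambda>c d. outer (OmegaRho p q) (OmegaRho p q) (a, c) (b, d))
       = (\<lambda>c d. complex_of_real (1 / real (p * q)) * munit a b c d)"
  using assms unfolding fun_eq_iff outer_def OmegaRho_def munit_def
  by (auto split: prod.split simp flip: of_real_mult)

lemma outer_uvec:
  assumes "a \<in> idx p q" "b \<in> idx p q"
  shows "outer (uvec p q m n) (uvec p q m n) (a, c) (b, d)
       = complex_of_real (1 / real (p * q)) * munit (idx_add p q (m, n) a) (idx_add p q (m, n) b) c d"
  using assms unfolding outer_def uvec_def munit_def idx_add_def
  by (auto split: prod.split simp flip: of_real_mult)

theorem mainTheorem10:
  fixes p q :: nat and \<alpha> :: "nat \<Rightarrow> nat \<Rightarrow> real"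
  assumes "p \<ge> 1" and "q \<ge> 1"
    and "\<forall>(i, j)\<in>idx p q. 0 \<le> \<alpha> i j \<and> \<alpha> i j \<le> 1"
    and "(\<Sum>(i, j)\<in>idx p q. \<alpha> i j) = 1"
    and "\<alpha> 0 0 = 0"
  shows
    "(\<forall>i j i' j' t. (i, j) \<in> idx p q \<longrightarrow> (i', j') \<in> idx p q \<longrightarrow> t \<ge> 0 \<longrightarrow>
       (\<forall>A\<in>idx p q. \<forall>B\<in>idx p q.
          Ttil p q \<alpha> t (munit (i, j) (i', j')) A B =
          complex_of_real (1 / real (p * q)) *
          (\<Sum>(m, n)\<in>idx p q. Phi p q \<alpha> (p - m) (q - n) t *
             munit ((m + i) mod p, (n + j) mod q) ((m + i') mod p, (n + j') mod q) A B)))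
   \<and> (\<forall>t. t \<ge> 0 \<longrightarrow>
       (\<forall>X\<in>idx p q \<times> idx p q. \<forall>Y\<in>idx p q \<times> idx p q.
          idtensor (Ttil p q \<alpha> t) (outer (OmegaRho p q) (OmegaRho p q)) X Y =
          complex_of_real (1 / real (p * q)) *
          (\<Sum>(m, n)\<in>idx p q. Phi p q \<alpha> (p - m) (q - n) t *
             outer (uvec p q m n) (uvec p q m n) X Y)))"
proof (intro conjI allI impI ballI)
  fix i j i' j' t A B
  assume "(i, j) \<in> idx p q" "(i', j') \<in> idx p q" "A \<in> idx p q" "B \<in> idx p q"
  then show "Ttil p q \<alpha> t (munit (i, j) (i', j')) A B =
      complex_of_real (1 / real (p * q)) *
      (\<Sum>(m, n)\<in>idx p q. Phi p q \<alpha> (p - m) (q - n) t *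
         munit ((m + i) mod p, (n + j) mod q) ((m + i') mod p, (n + j') mod q) A B)"
    using assms(5) by (simp add: Ttil_munit case_prod_beta idx_add_def)
next
  fix t :: real and X Y
  assume "X \<in> idx p q \<times> idx p q" "Y \<in> idx p q \<times> idx p q"
  then obtain a c b d where X: "X = (a, c)" "a \<in> idx p q" "c \<in> idx p q"
    and Y: "Y = (b, d)" "b \<in> idx p q" "d \<in> idx p q" by auto
  have "idtensor (Ttil p q \<alpha> t) (outer (OmegaRho p q) (OmegaRho p q)) X Y
      = complex_of_real (1 / real (p * q)) * Ttil p q \<alpha> t (munit a b) c d"
    unfolding X(1) Y(1) idtensor_def case_prod_conv OmegaRho_block[OF X(2) Y(2)]
    using Ttil_series_munit[where \<alpha> = \<alpha>, OF X(3) Y(3) X(2) Y(2) assms(5)]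
    by (intro Ttil_scale sums_summable)
  then show "idtensor (Ttil p q \<alpha> t) (outer (OmegaRho p q) (OmegaRho p q)) X Y =
      complex_of_real (1 / real (p * q)) *
      (\<Sum>(m, n)\<in>idx p q. Phi p q \<alpha> (p - m) (q - n) t * outer (uvec p q m n) (uvec p q m n) X Y)"
    using X Y assms(5)
    by (simp add: Ttil_munit outer_uvec case_prod_beta sum_distrib_left mult_ac)
qed

end
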